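(* Fix integers $N\ge 1$, $t\ge 1$, $m\ge 1$. Let $A\in\{0,1\}^{N\times N}$ be an observed adjacency matrix and $X$ an $N\times d$ node feature matrix. Let $p(z)$ be a prior probability density on $\mathbb{R}^{t}$, and let $z\mapsto \tilde A_z\in[0,1]^{N\times N}$ be a deterministic decoder (with parameters $\theta$) mapping a latent graph embedding $z\in\mathbb{R}^t$ to a probabilistic adjacency matrix. Define $$p^0_\theta(A\mid \tilde A_z)=P(A\mid\tilde A_z)=\prod_{i=1}^N\prod_{j=1}^N (\tilde A_z)_{i,j}^{A_{i,j}}\bigl(1-(\tilde A_z)_{i,j}\bigr)^{1-A_{i,j}}.$$ For $u=1,\dots,m$ let $\phi_u$ be a descriptor function mapping (soft) $N\times N$ adjacency matrices to $\mathbb{R}^{l_u}$ with $l_u\ge 1$, let $F_u=\phi_u(A)\in\mathbb{R}^{l_u}$ and write $|F_u|=l_u$, and let $\sigma_u>0$. Let $\gamma\ge 0$. Define the micro-macro loss $$\mathcal{L}_\theta(A)=\mathcal{L}^0_\theta(A)+\gamma\,\mathcal{L}^1_{\theta,\sigma}(F_1,\dots,F_m),$$ where $$\mathcal{L}^0_\theta(A)=-\ln\int P(A\mid\tilde A_z)\,p(z)\,dz,\qquad \mathcal{L}^1_{\theta,\sigma}(F_1,\dots,F_m)=-\sum_{u=1}^m\frac{1}{|F_u|}\ln\int \mathcal{N}\bigl(F_u\mid \phi_u(\tilde A_z),\sigma_u^2 I\bigr)\,p(z)\,dz,$$ with $\mathcal{N}(\cdot\mid\mu,\sigma^2I)$ the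 Gaussian density with mean $\mu$ and covariance $\sigma^2 I$. Then for any approximate posterior density $q_\phi(z\mid A,X)=q(z\mid A,X,F_1,\dots,F_m)$ on $\mathbb{R}^t$ (with parameters $\phi$), $$\mathcal{L}_\theta(A)\le \mathbb{E}_{z\sim q_\phi(z\mid A,X)}\Bigl[-\ln p^0_\theta(A\mid\tilde A_z)-\gamma\sum_{u=1}^m\frac{1}{|F_u|}\ln\mathcal{N}\bigl(F_u\mid\phi_u(\tilde A_z),\sigma_u^2 I\bigr)\Bigr]+(1+\gamma m)\,\mathrm{KL}\bigl(q_\phi(z\mid A,X)\,\|\,p(z)\bigr).$$
   Context: This is a variational (ELBO-type) bound for a joint generative model of a graph: the adjacency matrix is generated edge-independently from a probabilistic adjacency matrix $\tilde A_z$ decoded from a latent graph embedding $z\sim p(z)$, and each graph statistic $F_u$ is modeled conditionally on $z$ as Gaussian with mean $\phi_u(\tilde A_z)$ and diagonal covariance $\sigma_u^2 I$. $\mathrm{KL}$ denotes Kullback–Leibler divergence. The hyperparameter $\gamma$ weights the graph-statistic (macro) loss relative to the edge (micro) loss. *)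

theory Defs
  imports "HOL-Probability.Probability"
begin

text \<open>Nodes are indexed by a finite type 'n (so N = CARD('n)); latent embeddings
live in real ^ 't (so t = CARD('t)).  Descriptor u maps a soft adjacency matrix to
a vector indexed by {..< l u}.\<close>

definition bern_lik :: "('n::finite \<Rightarrow> 'n \<Rightarrow> nat) \<Rightarrow> ('n \<Rightarrow> 'n \<Rightarrow> real) \<Rightarrow> real" where
  "bern_lik A At = (\<Prod>i\<in>UNIV. \<Prod>j\<in>UNIV. At i j ^ A i j * (1 - At i j) ^ (1 - A i j))"

definition gauss_lik :: "nat \<Rightarrow> (nat \<Rightarrow> real) \<Rightarrow> (nat \<Rightarrow> real) \<Rightarrow> real \<Rightarrow> real" where
  "gauss_lik l F mu s = (\<Prod>k<l. normal_density (mu k) s (F k))"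

definition micro_loss ::
  "('n::finite \<Rightarrow> 'n \<Rightarrow> nat) \<Rightarrow> ('z::euclidean_space \<Rightarrow> 'n \<Rightarrow> 'n \<Rightarrow> real) \<Rightarrow> ('z \<Rightarrow> real) \<Rightarrow> real" where
  "micro_loss A At p = - ln (\<integral>z. bern_lik A (At z) * p z \<partial>lborel)"

definition macro_loss ::
  "nat \<Rightarrow> (nat \<Rightarrow> nat) \<Rightarrow> (nat \<Rightarrow> ('n::finite \<Rightarrow> 'n \<Rightarrow> real) \<Rightarrow> nat \<Rightarrow> real) \<Rightarrow> (nat \<Rightarrow> real)
   \<Rightarrow> ('n \<Rightarrow> 'n \<Rightarrow> nat) \<Rightarrow> ('z::euclidean_space \<Rightarrow> 'n \<Rightarrow> 'n \<Rightarrow> real) \<Rightarrow> ('z \<Rightarrow> real) \<Rightarrow> real" where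
  "macro_loss m l phi sg A At p =
     - (\<Sum>u\<in>{1..m}. (1 / real (l u)) *
          ln (\<integral>z. gauss_lik (l u) (phi u (\<lambda>i j. real (A i j))) (phi u (At z)) (sg u) * p z \<partial>lborel))"

definition mm_loss where
  "mm_loss gamma m l phi sg A At p =
     micro_loss A At p + gamma * macro_loss m l phi sg A At p"

end

theory Submission
  imports Defs
begin

(*
  Each of the m + 1 terms of the loss is a negative log marginal likelihood -ln E_p[f] of a
  likelihood f, and each obeys the evidence lower bound: for h = f p / q one has E_q[h] <= E_p[f]
  and ln h = ln f - ln (q / p) q-almost everywhere, so ln x <= x - 1 applied to h / E_p[f] gives
  E_q[ln f] - KL(q || p) = E_q[ln h] <= ln E_p[f].  The Bernoulli and Gaussian likelihoods are
  bounded, which makes all marginal likelihoods finite.  Adding the bounds with weights 1 and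
  gamma / |F_u| <= gamma, and using KL(q || p) >= 0, produces the factor 1 + gamma m.
*)

lemma absolutely_continuous_density_AE_zero:
  fixes p q :: "'a \<Rightarrow> real"
  assumes [measurable]: "p \<in> borel_measurable M" "q \<in> borel_measurable M"
    and q_nonneg: "\<And>x. 0 \<le> q x"
    and ac: "absolutely_continuous (density M p) (density M q)"
  shows "AE x in M. p x = 0 \<longrightarrow> q x = 0"
proof -
  let ?Z = "{x \<in> space M. p x = 0}"
  have "?Z \<in> null_sets (density M p)"
    by (subst null_sets_density_iff) auto
  then have "?Z \<in> null_sets (density M q)"
    using ac unfolding absolutely_continuous_def by auto
  then have "AE x in M. x \<in> ?Z \<longrightarrow> ennreal (q x) = 0"
    by (subst (asm) null_sets_density_iff) auto
  then show ?thesis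
    by (rule AE_mp) (auto simp: q_nonneg order_antisym)
qed

lemma (in sigma_finite_measure) AE_entropy_density_density:
  fixes p q :: "'a \<Rightarrow> real"
  assumes [measurable]: "p \<in> borel_measurable M" "q \<in> borel_measurable M"
    and nonneg: "\<And>x. 0 \<le> p x" "\<And>x. 0 \<le> q x"
    and ac: "absolutely_continuous (density M p) (density M q)"
  shows "AE x in density M q. entropy_density b (density M p) (density M q) x = log b (q x / p x)"
proof -
  interpret P: sigma_finite_measure "density M p"
    by (subst sigma_finite_iff_density_finite) auto
  have "density (density M p) (\<lambda>x. q x / p x) = density M q"
    using nonneg absolutely_continuous_density_AE_zero[OF _ _ _ ac]
    by (intro density_density_divide) auto
  then have "AE x in density M p. ennreal (q x / p x) = RN_deriv (density M p) (density M q) x"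
    by (intro P.RN_deriv_unique) auto
  then have "AE x in density M q. ennreal (q x / p x) = RN_deriv (density M p) (density M q) x"
    by (intro absolutely_continuous_AE[OF _ ac]) auto
  then show ?thesis
  proof eventually_elim
    case (elim x)
    then show ?case
      using nonneg by (simp add: entropy_density_def flip: elim)
  qed
qed

lemma prob_space_densityI:
  fixes f :: "'a \<Rightarrow> real"
  assumes "f \<in> borel_measurable M" and "(\<integral>\<^sup>+x. ennreal (f x) \<partial>M) = 1"
  shows "prob_space (density M f)"
  by (rule prob_spaceI) (use assms in \<open>simp add: emeasure_density\<close>)

lemma (in prob_space) expectation_ln_le_ln:
  fixes h :: "'a \<Rightarrow> real"
  assumes h_int: "integrable M h" and ln_h_int: "integrable M (\<lambda>x. ln (h x))"
    and h_pos: "AE x in M. 0 < h x"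
    and le_c: "expectation h \<le> c" and c_pos: "0 < c"
  shows "expectation (\<lambda>x. ln (h x)) \<le> ln c"
proof -
  have "expectation (\<lambda>x. ln (h x)) - ln c = expectation (\<lambda>x. ln (h x) - ln c)"
    using ln_h_int by (simp add: prob_space)
  also have "\<dots> \<le> expectation (\<lambda>x. h x / c - 1)"
  proof (rule integral_mono_AE)
    show "AE x in M. ln (h x) - ln c \<le> h x / c - 1"
      using h_pos
    proof eventually_elim
      case (elim x)
      then have "ln (h x) - ln c = ln (h x / c)"
        using c_pos by (simp add: ln_div)
      also have "\<dots> \<le> h x / c - 1"
        using elim c_pos by (intro ln_le_minus_one) simp
      finally show ?case .
    qed
  qed (use h_int ln_h_int in auto)
  also have "\<dots> = expectation h / c - 1"
    using h_int by (simp add: prob_space)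
  also have "\<dots> \<le> 0"
    using le_c c_pos by (simp add: field_simps)
  finally show ?thesis by simp
qed

lemma sum_weighted_le_add_card:
  fixes a b w :: "'u \<Rightarrow> real"
  assumes le: "\<And>u. u \<in> U \<Longrightarrow> a u \<le> b u + K"
    and w: "\<And>u. u \<in> U \<Longrightarrow> 0 \<le> w u \<and> w u \<le> 1" and "0 \<le> K"
  shows "(\<Sum>u\<in>U. w u * a u) \<le> (\<Sum>u\<in>U. w u * b u) + real (card U) * K"
proof -
  have "w u * a u \<le> w u * b u + K" if "u \<in> U" for u
  proof -
    have "w u * a u \<le> w u * (b u + K)"
      using le[OF that] w[OF that] by (intro mult_left_mono) auto
    also have "\<dots> \<le> w u * b u + K"
      using w[OF that] \<open>0 \<le> K\<close> by (simp add: distrib_left mult_left_le_one_le)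
    finally show ?thesis .
  qed
  then have "(\<Sum>u\<in>U. w u * a u) \<le> (\<Sum>u\<in>U. w u * b u + K)"
    by (rule sum_mono)
  then show ?thesis
    by (simp add: sum.distrib)
qed

lemma integral_diff_scaled_sum:
  fixes f :: "'a \<Rightarrow> real" and g :: "'u \<Rightarrow> 'a \<Rightarrow> real"
  assumes "integrable M f" and "\<And>u. u \<in> U \<Longrightarrow> integrable M (g u)"
  shows "(\<integral>x. f x - c * (\<Sum>u\<in>U. w u * g u x) \<partial>M)
    = (\<integral>x. f x \<partial>M) - c * (\<Sum>u\<in>U. w u * (\<integral>x. g u x \<partial>M))"
  using assms by (simp add: Bochner_Integration.integral_diff Bochner_Integration.integral_sum
      Bochner_Integration.integrable_sum)

locale finite_KL_densities = sigma_finite_measure M for M :: "'a measure" +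
  fixes p q :: "'a \<Rightarrow> real"
  assumes p_measurable [measurable]: "p \<in> borel_measurable M" and p_nonneg: "\<And>x. 0 \<le> p x"
    and prob_space_P: "prob_space (density M p)"
    and q_measurable [measurable]: "q \<in> borel_measurable M" and q_nonneg: "\<And>x. 0 \<le> q x"
    and prob_space_Q: "prob_space (density M q)"
    and absolutely_continuous: "absolutely_continuous (density M p) (density M q)"
    and integrable_entropy_density:
      "integrable (density M q) (entropy_density (exp 1) (density M p) (density M q))"
begin

abbreviation "P \<equiv> density M p"
abbreviation "Q \<equiv> density M q"

sublocale Q: prob_space Q
  by (rule prob_space_Q)

lemma AE_entropy_density_eq_ln_ratio:
  "AE x in Q. entropy_density (exp 1) P Q x = ln (q x / p x)"
  using AE_entropy_density_density[OF p_measurable q_measurable p_nonneg q_nonneg absolutely_continuous,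
      where b = "exp 1"]
  by (simp add: log_def)

lemma KL_divergence_eq_integral_ln_ratio:
  "KL_divergence (exp 1) P Q = (\<integral>x. ln (q x / p x) \<partial>Q)"
  unfolding KL_divergence_def using AE_entropy_density_eq_ln_ratio by (intro integral_cong_AE) auto

lemma integrable_ln_ratio: "integrable Q (\<lambda>x. ln (q x / p x))"
  using integrable_entropy_density AE_entropy_density_eq_ln_ratio
  by (subst integrable_cong_AE[symmetric]) auto

lemma AE_Q_densities_pos: "AE x in Q. 0 < p x \<and> 0 < q x"
  using absolutely_continuous_density_AE_zero[OF p_measurable q_measurable q_nonneg absolutely_continuous]
  by (subst AE_density) (auto elim!: eventually_mono simp: order.strict_iff_order p_nonneg q_nonneg)

lemma integral_pos_if_AE_Q_pos:
  fixes g :: "'a \<Rightarrow> real"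
  assumes "integrable M g" and "\<And>x. 0 \<le> g x" and g_pos: "AE x in Q. 0 < g x"
  shows "0 < integral\<^sup>L M g"
proof (rule ccontr)
  assume "\<not> 0 < integral\<^sup>L M g"
  moreover have "0 \<le> integral\<^sup>L M g"
    using assms by (intro integral_nonneg_AE) auto
  ultimately have "AE x in M. g x = 0"
    using assms by (subst integral_nonneg_eq_0_iff_AE[symmetric]) auto
  then have "AE x in Q. g x = 0"
    by (subst AE_density) auto
  with g_pos have "AE x in Q. False"
    by eventually_elim simp
  then show False
    by simp
qed

lemma evidence_lower_bound:
  fixes f :: "'a \<Rightarrow> real"
  assumes [measurable]: "f \<in> borel_measurable M" and f_nonneg: "\<And>x. 0 \<le> f x"
    and fp_int: "integrable M (\<lambda>x. f x * p x)"
    and f_pos: "AE x in Q. 0 < f x" and ln_f_int: "integrable Q (\<lambda>x. ln (f x))"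
  shows "- ln (\<integral>x. f x * p x \<partial>M) \<le> (\<integral>x. - ln (f x) \<partial>Q) + KL_divergence (exp 1) P Q"
proof -
  define c where "c = (\<integral>x. f x * p x \<partial>M)"
  define h where "h x = f x * p x / q x" for x
  have [measurable]: "h \<in> borel_measurable M"
    unfolding h_def[abs_def] by measurable
  have fp_pos: "AE x in Q. 0 < f x * p x"
    using f_pos AE_Q_densities_pos by eventually_elim simp
  have c_pos: "0 < c"
    unfolding c_def using fp_int fp_pos f_nonneg p_nonneg by (intro integral_pos_if_AE_Q_pos) auto
  have qh_int: "integrable M (\<lambda>x. q x * h x)"
    by (rule Bochner_Integration.integrable_bound[OF fp_int])
       (auto simp: h_def f_nonneg p_nonneg q_nonneg)
  then have h_int: "integrable Q h"
    by (subst integrable_density) (auto simp: q_nonneg)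
  have "(\<integral>x. h x \<partial>Q) = (\<integral>x. q x * h x \<partial>M)"
    by (subst integral_density) (auto simp: q_nonneg)
  also have "\<dots> \<le> c"
    unfolding c_def using qh_int fp_int
    by (intro integral_mono) (auto simp: h_def f_nonneg p_nonneg q_nonneg)
  finally have "(\<integral>x. h x \<partial>Q) \<le> c" .
  have ln_h: "AE x in Q. ln (h x) = ln (f x) - ln (q x / p x)"
    using f_pos AE_Q_densities_pos by eventually_elim (simp add: h_def ln_div ln_mult)
  have ln_h_int: "integrable Q (\<lambda>x. ln (h x))"
    using ln_h ln_f_int integrable_ln_ratio
    by (subst integrable_cong_AE[OF _ _ ln_h]) auto
  have h_pos: "AE x in Q. 0 < h x"
    using f_pos AE_Q_densities_pos by eventually_elim (simp add: h_def)
  have "(\<integral>x. ln (f x) \<partial>Q) - KL_divergence (exp 1) P Q = (\<integral>x. ln (h x) \<partial>Q)"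
    unfolding KL_divergence_eq_integral_ln_ratio
    using ln_f_int integrable_ln_ratio ln_h by (subst integral_cong_AE[OF _ _ ln_h]) auto
  also have "\<dots> \<le> ln c"
    by (rule Q.expectation_ln_le_ln) fact+
  finally show ?thesis
    unfolding c_def by simp
qed

lemma nn_integral_p_eq_1: "(\<integral>\<^sup>+x. ennreal (p x) \<partial>M) = 1"
proof -
  have "(\<integral>\<^sup>+x. ennreal (p x) \<partial>M) = (\<integral>\<^sup>+x. 1 \<partial>P)"
    by (subst nn_integral_density) auto
  also have "\<dots> = 1"
    using prob_space.emeasure_space_1[OF prob_space_P] by simp
  finally show ?thesis .
qed

lemma integrable_p: "integrable M p"
  using nn_integral_p_eq_1 by (intro integrableI_nonneg) (auto simp: p_nonneg)

lemma integral_p_eq_1: "(\<integral>x. p x \<partial>M) = 1"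
  using nn_integral_p_eq_1 by (subst integral_eq_nn_integral) (auto simp: p_nonneg)

lemma evidence_lower_bound_bounded:
  fixes f :: "'a \<Rightarrow> real"
  assumes [measurable]: "f \<in> borel_measurable M"
    and f_nonneg: "\<And>x. 0 \<le> f x" and f_le: "\<And>x. f x \<le> C"
    and "AE x in Q. 0 < f x" and "integrable Q (\<lambda>x. ln (f x))"
  shows "- ln (\<integral>x. f x * p x \<partial>M) \<le> (\<integral>x. - ln (f x) \<partial>Q) + KL_divergence (exp 1) P Q"
proof (rule evidence_lower_bound)
  have "0 \<le> C"
    using f_nonneg f_le order_trans by blast
  then show "integrable M (\<lambda>x. f x * p x)"
    by (intro Bochner_Integration.integrable_bound[OF integrable_mult_left[OF integrable_p, of C]])
       (auto simp: abs_mult f_nonneg p_nonneg f_le mult.commute[of "p _"] intro!: mult_right_mono)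
qed fact+

lemma KL_divergence_nonneg: "0 \<le> KL_divergence (exp 1) P Q"
  using evidence_lower_bound_bounded[of "\<lambda>_. 1" 1] integral_p_eq_1 by simp


end

lemma borel_measurable_bern_lik:
  assumes "\<And>i j. (\<lambda>x. At x i j) \<in> borel_measurable M"
  shows "(\<lambda>x. bern_lik A (At x)) \<in> borel_measurable M"
  using assms unfolding bern_lik_def by measurable

lemma bern_lik_nonneg:
  assumes "\<And>i j. 0 \<le> At i j" and "\<And>i j. At i j \<le> 1"
  shows "0 \<le> bern_lik A At"
  using assms unfolding bern_lik_def by (auto intro!: prod_nonneg)

lemma bern_lik_le_1:
  assumes "\<And>i j. 0 \<le> At i j" and "\<And>i j. At i j \<le> 1"
  shows "bern_lik A At \<le> 1"
  using assms unfolding bern_lik_def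
  by (auto intro!: prod_le_1 prod_nonneg mult_le_one power_le_one)

lemma normal_density_le: "0 < s \<Longrightarrow> normal_density mu s x \<le> 1 / sqrt (2 * pi * s\<^sup>2)"
  unfolding normal_density_def by (intro mult_left_le) auto

lemma borel_measurable_gauss_lik:
  assumes "\<And>k. k < l \<Longrightarrow> (\<lambda>x. mu x k) \<in> borel_measurable M"
  shows "(\<lambda>x. gauss_lik l F (mu x) s) \<in> borel_measurable M"
  unfolding gauss_lik_def normal_density_def
  by (rule borel_measurable_prod) (use assms in measurable)

lemma gauss_lik_pos: "0 < s \<Longrightarrow> 0 < gauss_lik l F mu s"
  unfolding gauss_lik_def by (auto intro!: prod_pos normal_density_pos)

lemma gauss_lik_le: "0 < s \<Longrightarrow> gauss_lik l F mu s \<le> (1 / sqrt (2 * pi * s\<^sup>2)) ^ l"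
  using prod_mono[of "{..<l}" "\<lambda>k. normal_density (mu k) s (F k)" "\<lambda>_. 1 / sqrt (2 * pi * s\<^sup>2)"]
  unfolding gauss_lik_def by (simp add: normal_density_le)

theorem proposition1:
  fixes A :: "'n::finite \<Rightarrow> 'n \<Rightarrow> nat"
    and At :: "real ^ 't \<Rightarrow> 'n \<Rightarrow> 'n \<Rightarrow> real"
    and p q :: "real ^ 't \<Rightarrow> real"
    and m :: nat and l :: "nat \<Rightarrow> nat"
    and phi :: "nat \<Rightarrow> ('n \<Rightarrow> 'n \<Rightarrow> real) \<Rightarrow> nat \<Rightarrow> real"
    and sg :: "nat \<Rightarrow> real" and gamma :: real
  assumes m_pos: "m \<ge> 1"
    and A01: "\<forall>i j. A i j \<in> {0, 1}"
    and At01: "\<forall>z i j. 0 \<le> At z i j \<and> At z i j \<le> 1"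
    and At_meas: "\<forall>i j. (\<lambda>z. At z i j) \<in> borel_measurable lborel"
    and l_pos: "\<forall>u\<in>{1..m}. l u \<ge> 1"
    and phi_meas: "\<forall>u\<in>{1..m}. \<forall>k<l u. (\<lambda>z. phi u (At z) k) \<in> borel_measurable lborel"
    and sigma_pos: "\<forall>u\<in>{1..m}. sg u > 0"
    and gamma_nn: "gamma \<ge> 0"
    and p_meas: "p \<in> borel_measurable lborel" and p_nn: "\<forall>z. p z \<ge> 0"
    and p_prob: "(\<integral>\<^sup>+ z. ennreal (p z) \<partial>lborel) = 1"
    and q_meas: "q \<in> borel_measurable lborel" and q_nn: "\<forall>z. q z \<ge> 0"
    and q_prob: "(\<integral>\<^sup>+ z. ennreal (q z) \<partial>lborel) = 1"
    and q_ac: "absolutely_continuous (density lborel (\<lambda>z. ennreal (p z))) (density lborel (\<lambda>z. ennreal (q z)))"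
    and KL_int: "integrable (density lborel (\<lambda>z. ennreal (q z)))
                   (entropy_density (exp 1) (density lborel (\<lambda>z. ennreal (p z))) (density lborel (\<lambda>z. ennreal (q z))))"
    and lik_pos: "AE z in density lborel (\<lambda>z. ennreal (q z)). bern_lik A (At z) > 0"
    and micro_int: "integrable (density lborel (\<lambda>z. ennreal (q z))) (\<lambda>z. - ln (bern_lik A (At z)))"
    and macro_int: "\<forall>u\<in>{1..m}. integrable (density lborel (\<lambda>z. ennreal (q z)))
                      (\<lambda>z. ln (gauss_lik (l u) (phi u (\<lambda>i j. real (A i j))) (phi u (At z)) (sg u)))"
  shows "mm_loss gamma m l phi sg A At p
    \<le> (\<integral>z. (- ln (bern_lik A (At z))
             - gamma * (\<Sum>u\<in>{1..m}. (1 / real (l u)) *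
                 ln (gauss_lik (l u) (phi u (\<lambda>i j. real (A i j))) (phi u (At z)) (sg u))))
          \<partial>density lborel (\<lambda>z. ennreal (q z)))
      + (1 + gamma * real m) *
        KL_divergence (exp 1) (density lborel (\<lambda>z. ennreal (p z))) (density lborel (\<lambda>z. ennreal (q z)))"
proof -
  interpret finite_KL_densities lborel p q
    using sigma_finite_lborel p_meas p_nn q_meas q_nn q_ac KL_int
      prob_space_densityI[OF p_meas p_prob] prob_space_densityI[OF q_meas q_prob]
    by (intro finite_KL_densities.intro finite_KL_densities_axioms.intro) auto
  have [measurable]: "\<And>i j. (\<lambda>z. At z i j) \<in> borel_measurable lborel"
    using At_meas by auto
  let ?KL = "KL_divergence (exp 1) P Q"
  let ?B = "\<lambda>z. bern_lik A (At z)"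
  let ?G = "\<lambda>u z. gauss_lik (l u) (phi u (\<lambda>i j. real (A i j))) (phi u (At z)) (sg u)"
  have micro: "micro_loss A At p \<le> (\<integral>z. - ln (?B z) \<partial>Q) + ?KL"
    unfolding micro_loss_def using At01 lik_pos micro_int
    by (intro evidence_lower_bound_bounded[where C = 1])
       (auto intro!: borel_measurable_bern_lik bern_lik_nonneg bern_lik_le_1)
  have macro: "- ln (\<integral>z. ?G u z * p z \<partial>lborel) \<le> (\<integral>z. - ln (?G u z) \<partial>Q) + ?KL"
    if "u \<in> {1..m}" for u
    using that sigma_pos phi_meas macro_int
    by (intro evidence_lower_bound_bounded[where C = "(1 / sqrt (2 * pi * (sg u)\<^sup>2)) ^ l u"])
       (auto intro!: borel_measurable_gauss_lik gauss_lik_le less_imp_le[OF gauss_lik_pos] gauss_lik_pos)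
  have macro_sum: "(\<Sum>u\<in>{1..m}. 1 / real (l u) * - ln (\<integral>z. ?G u z * p z \<partial>lborel))
      \<le> (\<Sum>u\<in>{1..m}. 1 / real (l u) * (\<integral>z. - ln (?G u z) \<partial>Q)) + real (card {1..m}) * ?KL"
    using l_pos KL_divergence_nonneg by (intro sum_weighted_le_add_card macro) (auto simp: divide_le_eq_1)
  have "mm_loss gamma m l phi sg A At p
      = micro_loss A At p + gamma * (\<Sum>u\<in>{1..m}. 1 / real (l u) * - ln (\<integral>z. ?G u z * p z \<partial>lborel))"
    unfolding mm_loss_def macro_loss_def by (simp add: sum_negf)
  also have "\<dots> \<le> ((\<integral>z. - ln (?B z) \<partial>Q) + ?KL)
      + gamma * ((\<Sum>u\<in>{1..m}. 1 / real (l u) * (\<integral>z. - ln (?G u z) \<partial>Q)) + real (card {1..m}) * ?KL)"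
    using micro macro_sum gamma_nn by (intro add_mono mult_left_mono)
  also have "\<dots> = (\<integral>z. - ln (?B z) - gamma * (\<Sum>u\<in>{1..m}. 1 / real (l u) * ln (?G u z)) \<partial>Q)
      + (1 + gamma * real m) * ?KL"
    using micro_int macro_int
    by (subst integral_diff_scaled_sum) (auto simp: algebra_simps sum_negf)
  finally show ?thesis .
qed

end
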